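(* For $m \ge 1$, the number $b(m)$ of odd Grassmannian involutions of $[m]$ equals $\left\lfloor \frac{(m+1)^2}{8}\right\rfloor$.
   Context: A permutation is Grassmannian if it has at most one descent; a Grassmannian involution is a Grassmannian permutation $\pi$ with $\pi^{-1}=\pi$. A permutation is odd if it has an odd number of inversions (pairs $i<j$ with $\pi_i>\pi_j$). *)

theory Defs
  imports Complex_Main "HOL-Combinatorics.Permutations"
begin

definition descents :: "nat \<Rightarrow> (nat \<Rightarrow> nat) \<Rightarrow> nat set" where
  "descents m p = {i. 1 \<le> i \<and> i < m \<and> p i > p (Suc i)}"

definition grassmannian :: "nat \<Rightarrow> (nat \<Rightarrow> nat) \<Rightarrow> bool" where
  "grassmannian m p \<longleftrightarrow> card (descents m p) \<le> 1"

definition inversions :: "nat \<Rightarrow> (nat \<Rightarrow> nat) \<Rightarrow> (nat \<times> nat) set" where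
  "inversions m p = {(i, j). 1 \<le> i \<and> i < j \<and> j \<le> m \<and> p i > p j}"

definition odd_perm :: "nat \<Rightarrow> (nat \<Rightarrow> nat) \<Rightarrow> bool" where
  "odd_perm m p \<longleftrightarrow> odd (card (inversions m p))"

definition grassmannian_involution :: "nat \<Rightarrow> (nat \<Rightarrow> nat) \<Rightarrow> bool" where
  "grassmannian_involution m p \<longleftrightarrow>
     p permutes {1..m} \<and> grassmannian m p \<and> inv p = p"

definition b :: "nat \<Rightarrow> nat" where
  "b m = card {p. grassmannian_involution m p \<and> odd_perm m p}"

end

theory Submission
  imports Defs
begin

text \<open>A Grassmannian permutation of [m] increases on [1..k] and on [k+1..m] for some k.
  If it is also an involution, every point of [1..k] mapped beyond k is matched with a point
  of [k+1..m] mapped back, monotonicity makes these two sets adjacent blocks of equal length j,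
  and all other points are fixed: the permutation swaps the blocks (a, a+j] and (a+j, a+2j]
  without reordering them. Such a block swap has exactly j^2 inversions, so it is odd
  iff j is odd, and counting the pairs (a, j) with j odd and a + 2j \<le> m gives
  \<lfloor>(m+1)^2/8\<rfloor>.\<close>

definition block_swap :: "nat \<Rightarrow> nat \<Rightarrow> nat \<Rightarrow> nat" where
  "block_swap a j x =
     (if a < x \<and> x \<le> a + j then x + j
      else if a + j < x \<and> x \<le> a + 2 * j then x - j
      else x)"

lemma block_swap_block_swap [simp]: "block_swap a j (block_swap a j x) = x"
  unfolding block_swap_def by auto

lemma block_swap_permutes:
  assumes "a + 2 * j \<le> m"
  shows "block_swap a j permutes {1..m}"
proof (rule bij_imp_permutes)
  show "bij_betw (block_swap a j) {1..m} {1..m}"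
    by (rule bij_betw_byWitness[where f' = "block_swap a j"])
       (use assms in \<open>auto simp: block_swap_def\<close>)
  show "block_swap a j x = x" if "x \<notin> {1..m}" for x
    using that assms by (auto simp: block_swap_def)
qed

lemma inv_block_swap: "inv (block_swap a j) = block_swap a j"
  by (rule inv_unique_comp) (auto simp: fun_eq_iff)

lemma grassmannian_block_swap: "grassmannian m (block_swap a j)"
proof -
  have "descents m (block_swap a j) \<subseteq> {a + j}"
    unfolding descents_def block_swap_def by auto
  then have "card (descents m (block_swap a j)) \<le> card {a + j}"
    by (rule card_mono[rotated]) simp
  then show ?thesis
    unfolding grassmannian_def by simp
qed

lemma inversions_block_swap:
  assumes "a + 2 * j \<le> m"
  shows "inversions m (block_swap a j) = {a<..a + j} \<times> {a + j<..a + 2 * j}"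
  using assms unfolding inversions_def block_swap_def
  by (auto split: if_splits)

lemma odd_perm_block_swap_iff:
  assumes "a + 2 * j \<le> m"
  shows "odd_perm m (block_swap a j) \<longleftrightarrow> odd j"
  using assms by (simp add: odd_perm_def inversions_block_swap)

lemma block_swap_inj_on: "inj_on (\<lambda>(a, j). block_swap a j) {(a, j). 0 < j}"
proof (rule inj_onI, clarsimp)
  fix a j a' j' :: nat
  assume "0 < j" "0 < j'" and eq: "block_swap a j = block_swap a' j'"
  have "a = a'"
  proof (rule ccontr)
    assume "a \<noteq> a'"
    then show False
      using fun_cong[OF eq, of "Suc (min a a')"] \<open>0 < j\<close> \<open>0 < j'\<close>
      by (auto simp: block_swap_def min_def split: if_splits)
  qed
  moreover have "j = j'"
    using fun_cong[OF eq, of "Suc a"] \<open>0 < j\<close> \<open>0 < j'\<close> \<open>a = a'\<close>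
    by (auto simp: block_swap_def)
  ultimately show "a = a' \<and> j = j'" ..
qed

lemma strict_mono_on_nat_gap:
  fixes f :: "nat \<Rightarrow> nat"
  assumes mono: "strict_mono_on {lo..hi} f" and "lo \<le> x" "x \<le> y" "y \<le> hi"
  shows "f x + (y - x) \<le> f y"
  using \<open>x \<le> y\<close> \<open>y \<le> hi\<close>
proof (induction y rule: dec_induct)
  case (step n)
  then have "f n < f (Suc n)"
    using \<open>lo \<le> x\<close> by (intro strict_mono_onD[OF mono]) auto
  with step show ?case by fastforce
qed simp

lemma strict_mono_on_nat_shift:
  fixes f :: "nat \<Rightarrow> nat"
  assumes mono: "strict_mono_on {lo..hi} f"
    and "lo' \<le> f lo" "f hi \<le> lo' + (hi - lo)" "x \<in> {lo..hi}"
  shows "f x + lo = x + lo'"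
  using strict_mono_on_nat_gap[OF mono, of lo x] strict_mono_on_nat_gap[OF mono, of x hi] assms
  by auto

lemma strict_mono_on_nat_ivlI:
  fixes f :: "nat \<Rightarrow> nat"
  assumes "\<And>i. lo \<le> i \<Longrightarrow> i < hi \<Longrightarrow> f i < f (Suc i)"
  shows "strict_mono_on {lo..hi} f"
  by (rule strict_mono_onI, rule lift_Suc_mono_less_ivl[of "{lo..<hi}"]) (use assms in auto)

lemma upward_closed_eq_greaterThanAtMost:
  fixes A :: "nat set"
  assumes "A \<subseteq> {0<..k}"
    and up: "\<And>x y. x \<in> A \<Longrightarrow> x \<le> y \<Longrightarrow> y \<le> k \<Longrightarrow> y \<in> A"
  shows "A = {k - card A<..k}"
proof (cases "A = {}")
  case False
  have "finite A"
    using assms(1) finite_subset by blast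
  define a where "a = Min A"
  have "a \<in> A" "0 < a"
    using Min_in[OF \<open>finite A\<close> False] assms(1) unfolding a_def by auto
  have "A = {a..k}"
    using up[OF \<open>a \<in> A\<close>] Min_le[OF \<open>finite A\<close>] assms(1) unfolding a_def by fastforce
  with \<open>0 < a\<close> show ?thesis
    by auto
qed simp

lemma downward_closed_eq_greaterThanAtMost:
  fixes B :: "nat set"
  assumes "finite B" "B \<subseteq> {k<..}"
    and down: "\<And>x y. x \<in> B \<Longrightarrow> k < y \<Longrightarrow> y \<le> x \<Longrightarrow> y \<in> B"
  shows "B = {k<..k + card B}"
proof (cases "B = {}")
  case False
  define b where "b = Max B"
  have "b \<in> B"
    using Max_in[OF \<open>finite B\<close> False] unfolding b_def by auto
  have "B = {k<..b}"
    using down[OF \<open>b \<in> B\<close>] Max_ge[OF \<open>finite B\<close>] assms(2) unfolding b_def by fastforce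
  then show ?thesis
    by auto
qed simp

lemma grassmannian_ascending_runs:
  assumes "inj p" "grassmannian m p"
  obtains k where "k \<le> m"
    "\<And>i. 1 \<le> i \<Longrightarrow> i < k \<Longrightarrow> p i < p (Suc i)"
    "\<And>i. k < i \<Longrightarrow> i < m \<Longrightarrow> p i < p (Suc i)"
proof -
  have ascent: "p i < p (Suc i)" if "1 \<le> i" "i < m" "i \<notin> descents m p" for i
    using that injD[OF \<open>inj p\<close>, of i "Suc i"] by (fastforce simp: descents_def)
  have "finite (descents m p)"
    by (rule finite_subset[of _ "{..m}"]) (auto simp: descents_def)
  then consider "descents m p = {}" | k where "descents m p = {k}"
    using \<open>grassmannian m p\<close> unfolding grassmannian_def
    by (metis card_0_eq card_1_singletonE le_Suc_eq le_zero_eq One_nat_def)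
  then show thesis
  proof cases
    case 1
    then show thesis
      using that[of m] ascent by auto
  next
    case (2 k)
    then have "k < m"
      by (auto simp: descents_def)
    then show thesis
      using that[of k] ascent 2 by auto
  qed
qed

text \<open>k is the descent of p, or m if p has none.\<close>

locale two_run_involution =
  fixes m k :: nat and p :: "nat \<Rightarrow> nat"
  assumes permutes: "p permutes {1..m}"
    and involutive: "\<And>x. p (p x) = x"
    and k_le_m: "k \<le> m"
    and left_ascent: "\<And>i. 1 \<le> i \<Longrightarrow> i < k \<Longrightarrow> p i < p (Suc i)"
    and right_ascent: "\<And>i. k < i \<Longrightarrow> i < m \<Longrightarrow> p i < p (Suc i)"
begin

lemma in_range: "x \<in> {1..m} \<Longrightarrow> p x \<in> {1..m}"
  using permutes_in_image[OF permutes] by blast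

lemma strict_mono_left: "strict_mono_on {1..k} p"
  by (rule strict_mono_on_nat_ivlI) (rule left_ascent)

lemma strict_mono_right: "strict_mono_on {Suc k..m} p"
  by (rule strict_mono_on_nat_ivlI) (simp add: right_ascent)

lemma le_image_left: "x \<in> {1..k} \<Longrightarrow> x \<le> p x"
  using strict_mono_on_nat_gap[OF strict_mono_left, of 1 x] in_range[of 1] k_le_m by auto

lemma image_le_right: "x \<in> {Suc k..m} \<Longrightarrow> p x \<le> x"
  using strict_mono_on_nat_gap[OF strict_mono_right, of x m] in_range[of m] by auto

lemma fixed_left: "x \<in> {1..k} \<Longrightarrow> p x \<le> k \<Longrightarrow> p x = x"
  using le_image_left[of x] le_image_left[of "p x"] involutive[of x] by auto

lemma fixed_right: "x \<in> {Suc k..m} \<Longrightarrow> k < p x \<Longrightarrow> p x = x"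
  using image_le_right[of x] image_le_right[of "p x"] involutive[of x] by auto

definition left_movers :: "nat set" where
  "left_movers = {x \<in> {1..k}. k < p x}"

definition right_movers :: "nat set" where
  "right_movers = {x \<in> {Suc k..m}. p x \<le> k}"

lemma image_left_movers: "p ` left_movers = right_movers"
proof -
  have "p x \<in> right_movers" if "x \<in> left_movers" for x
    using that in_range[of x] involutive[of x] k_le_m by (auto simp: left_movers_def right_movers_def)
  moreover have "p x \<in> left_movers" if "x \<in> right_movers" for x
    using that in_range[of x] involutive[of x] by (auto simp: left_movers_def right_movers_def)
  ultimately show ?thesis
    using involutive by (metis image_eqI subsetI subset_antisym image_subsetI)
qed

lemma image_right_movers: "p ` right_movers = left_movers"
  using involutive by (simp add: image_left_movers[symmetric] image_comp comp_def)

lemma card_right_movers: "card right_movers = card left_movers"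
  using image_left_movers card_image permutes_inj_on[OF permutes] by metis

lemma left_movers_eq: "left_movers = {k - card left_movers<..k}"
proof (rule upward_closed_eq_greaterThanAtMost)
  show "y \<in> left_movers" if "x \<in> left_movers" "x \<le> y" "y \<le> k" for x y
    using that strict_mono_on_leD[OF strict_mono_left, of x y] by (auto simp: left_movers_def)
qed (auto simp: left_movers_def)

lemma right_movers_eq: "right_movers = {k<..k + card left_movers}"
  unfolding card_right_movers[symmetric]
proof (rule downward_closed_eq_greaterThanAtMost)
  show "y \<in> right_movers" if "x \<in> right_movers" "k < y" "y \<le> x" for x y
    using that strict_mono_on_leD[OF strict_mono_right, of y x] by (auto simp: right_movers_def)
qed (auto simp: right_movers_def)

lemma mem_left_movers_iff: "x \<in> left_movers \<longleftrightarrow> k - card left_movers < x \<and> x \<le> k"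
  by (subst left_movers_eq) simp

lemma mem_right_movers_iff: "x \<in> right_movers \<longleftrightarrow> k < x \<and> x \<le> k + card left_movers"
  by (subst right_movers_eq) simp

lemma movers_bound: "card left_movers \<le> k" "k + card left_movers \<le> m"
proof -
  have "card left_movers \<le> card {1..k}"
    by (rule card_mono) (auto simp: left_movers_def)
  moreover have "card right_movers \<le> card {Suc k..m}"
    by (rule card_mono) (auto simp: right_movers_def)
  ultimately show "card left_movers \<le> k" "k + card left_movers \<le> m"
    using card_right_movers k_le_m by auto
qed

lemma fixed_non_movers: "x \<notin> left_movers \<Longrightarrow> x \<notin> right_movers \<Longrightarrow> p x = x"
  using permutes_not_in[OF permutes, of x] fixed_left[of x] fixed_right[of x]
  by (cases "x \<in> {1..m}"; cases "x \<le> k") (auto simp: left_movers_def right_movers_def)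

lemma shift_left_movers:
  assumes "x \<in> left_movers"
  shows "p x = x + card left_movers"
proof -
  let ?a = "k - card left_movers"
  have "strict_mono_on {Suc ?a..k} p"
    by (rule monotone_on_subset[OF strict_mono_left]) auto
  moreover have "Suc ?a \<in> left_movers" "k \<in> left_movers"
    using assms by (auto simp: mem_left_movers_iff)
  then have "p (Suc ?a) \<in> right_movers" "p k \<in> right_movers"
    using image_left_movers by blast+
  ultimately have "p x + Suc ?a = x + Suc k"
    using assms movers_bound
    by (intro strict_mono_on_nat_shift) (auto simp: mem_left_movers_iff mem_right_movers_iff)
  then show ?thesis
    using movers_bound by simp
qed

lemma shift_right_movers:
  assumes "x \<in> right_movers"
  shows "p x = x - card left_movers"
proof -
  let ?a = "k - card left_movers"
  have "strict_mono_on {Suc k..k + card left_movers} p"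
    by (rule monotone_on_subset[OF strict_mono_right]) (use movers_bound in auto)
  moreover have "Suc k \<in> right_movers" "k + card left_movers \<in> right_movers"
    using assms by (auto simp: mem_right_movers_iff)
  then have "p (Suc k) \<in> left_movers" "p (k + card left_movers) \<in> left_movers"
    using image_right_movers by blast+
  ultimately have "p x + Suc k = x + Suc ?a"
    using assms movers_bound
    by (intro strict_mono_on_nat_shift) (auto simp: mem_left_movers_iff mem_right_movers_iff)
  then show ?thesis
    using movers_bound by simp
qed

lemma eq_block_swap: "p = block_swap (k - card left_movers) (card left_movers)"
proof
  fix x
  show "p x = block_swap (k - card left_movers) (card left_movers) x"
    using shift_left_movers[of x] shift_right_movers[of x] fixed_non_movers[of x] movers_bound
    by (auto simp: block_swap_def mem_left_movers_iff mem_right_movers_iff)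
qed

end

lemma grassmannian_involution_iff_block_swap:
  "grassmannian_involution m p \<longleftrightarrow> (\<exists>a j. a + 2 * j \<le> m \<and> p = block_swap a j)"
proof
  assume "grassmannian_involution m p"
  then have gi: "p permutes {1..m}" "grassmannian m p" "inv p = p"
    unfolding grassmannian_involution_def by auto
  then have involutive: "p (p x) = x" for x
    by (metis permutes_inverses(1))
  obtain k where "k \<le> m"
    "\<And>i. 1 \<le> i \<Longrightarrow> i < k \<Longrightarrow> p i < p (Suc i)"
    "\<And>i. k < i \<Longrightarrow> i < m \<Longrightarrow> p i < p (Suc i)"
    using grassmannian_ascending_runs[OF permutes_inj[OF gi(1)] gi(2)] by blast
  then interpret two_run_involution m k p
    using gi(1) involutive by unfold_locales
  show "\<exists>a j. a + 2 * j \<le> m \<and> p = block_swap a j"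
    using eq_block_swap movers_bound
    by (intro exI[of _ "k - card left_movers"] exI[of _ "card left_movers"]) simp
next
  assume "\<exists>a j. a + 2 * j \<le> m \<and> p = block_swap a j"
  then show "grassmannian_involution m p"
    unfolding grassmannian_involution_def
    using block_swap_permutes grassmannian_block_swap inv_block_swap by blast
qed

lemma odd_grassmannian_involutions_eq:
  "{p. grassmannian_involution m p \<and> odd_perm m p} =
     (\<lambda>(a, j). block_swap a j) ` {(a, j). odd j \<and> a + 2 * j \<le> m}"
  by (auto simp: grassmannian_involution_iff_block_swap odd_perm_block_swap_iff)

lemma square_div_8_step: "(n + 2 :: nat)\<^sup>2 div 8 = (n + 1)\<^sup>2 div 8 + (n + 3) div 4"
proof -
  obtain q r where n: "n = 4 * q + r" "r < 4"
    by (metis div_mod_decomp mod_less_divisor zero_less_numeral mult.commute)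
  then have "r = 0 \<or> r = 1 \<or> r = 2 \<or> r = 3"
    by arith
  then have small: "(r + 2)\<^sup>2 div 8 = (r + 1)\<^sup>2 div 8 + (r + 3) div 4"
    by (elim disjE) (simp_all add: power2_eq_square)
  define Y where "Y = 2 * q * q + q * (r + 1)"
  have "(n + 2)\<^sup>2 = (r + 2)\<^sup>2 + (Y + q) * 8" "(n + 1)\<^sup>2 = (r + 1)\<^sup>2 + Y * 8"
    "n + 3 = (r + 3) + q * 4"
    unfolding n(1) Y_def power2_eq_square by algebra+
  then have "(n + 2)\<^sup>2 div 8 = (r + 2)\<^sup>2 div 8 + Y + q"
    "(n + 1)\<^sup>2 div 8 = (r + 1)\<^sup>2 div 8 + Y" "(n + 3) div 4 = (r + 3) div 4 + q"
    by simp_all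
  with small show ?thesis
    by simp
qed

lemma card_odd_le_half: "card {j :: nat. odd j \<and> 2 * j \<le> n} = (n + 2) div 4"
proof -
  have "{j :: nat. odd j \<and> 2 * j \<le> n} = (\<lambda>i. 2 * i + 1) ` {..<(n + 2) div 4}"
    by (auto elim!: oddE)
  moreover have "inj (\<lambda>i :: nat. 2 * i + 1)"
    by (auto simp: inj_def)
  ultimately show ?thesis
    by (simp add: card_image inj_on_subset)
qed

lemma card_odd_block_swap_params:
  "card {(a, j :: nat). odd j \<and> a + 2 * j \<le> m} = (m + 1)\<^sup>2 div 8"
proof (induction m)
  case (Suc m)
  let ?S = "\<lambda>m. {(a, j :: nat). odd j \<and> a + 2 * j \<le> m}"
  define T where "T = {(a, j). odd j \<and> a + 2 * j = Suc m}"
  have "?S (Suc m) = ?S m \<union> T" "?S m \<inter> T = {}"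
    by (auto simp: T_def)
  moreover have "finite (?S m)"
    by (rule finite_subset[of _ "{..m} \<times> {..m}"]) auto
  moreover have T: "T = (\<lambda>j. (Suc m - 2 * j, j)) ` {j. odd j \<and> 2 * j \<le> Suc m}"
    by (auto simp: T_def image_iff)
  moreover have "card T = (m + 3) div 4"
    unfolding T by (subst card_image) (auto simp: inj_on_def card_odd_le_half)
  moreover have "finite T"
    unfolding T by (rule finite_imageI, rule finite_subset[of _ "{..Suc m}"]) auto
  ultimately have "card (?S (Suc m)) = (m + 1)\<^sup>2 div 8 + (m + 3) div 4"
    using Suc.IH by (simp add: card_Un_disjoint)
  then show ?case
    using square_div_8_step[of m] by simp
qed (auto simp: card_eq_0_iff)

theorem mainTheorem19:
  fixes m :: nat
  assumes "m \<ge> 1"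
  shows "b m = nat \<lfloor>(real (m + 1))^2 / 8\<rfloor>"
proof -
  have "b m = card {(a, j). odd j \<and> a + 2 * j \<le> m}"
    unfolding b_def odd_grassmannian_involutions_eq
    by (rule card_image, rule inj_on_subset[OF block_swap_inj_on]) (auto intro: odd_pos)
  also have "\<dots> = (m + 1)\<^sup>2 div 8"
    by (rule card_odd_block_swap_params)
  also have "\<dots> = nat \<lfloor>(real (m + 1))^2 / 8\<rfloor>"
  proof -
    have "(real (m + 1))^2 / 8 = real ((m + 1)\<^sup>2) / real (8 :: nat)"
      by simp
    then show ?thesis
      by (simp only: floor_divide_of_nat_eq nat_int)
  qed
  finally show ?thesis .
qed

end
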